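(* Let $v$ be a subharmonic function on $\mathbf D$ with $v(z)\le C\log\frac{e}{1-|z|}$ for all $z\in\mathbf D$. Suppose that for some $\sigma>0$, $\theta\in[0,2\pi]$ and $r_0\in(0,1)$ we have $v(re^{i\theta})<-\sigma\log\frac{e}{1-r}$ for all $r>r_0$. Then there are $\tau_2=\tau_2(C,\sigma)>0$ and $r_1=r_1(r_0)<1$ such that $v(re^{i(\theta+\delta)})<-\frac\sigma2\log\frac{e}{1-r}$ for all $r>r_1$ and all $|\delta|<\tau_2(1-r)$.
   Context: $\mathbf D$ is the open unit disc. *)

theory Defs
  imports "HOL-Analysis.Analysis"
begin

definition unit_disc :: "complex set" where
  "unit_disc = ball 0 1"

definition usc_on :: "complex set \<Rightarrow> (complex \<Rightarrow> ereal) \<Rightarrow> bool" where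
  "usc_on S v \<longleftrightarrow>
     (\<forall>z\<in>S. \<forall>c. v z < c \<longrightarrow> (\<forall>\<^sub>F w in at z within S. v w < c))"

definition circle_mean :: "(complex \<Rightarrow> ereal) \<Rightarrow> complex \<Rightarrow> real \<Rightarrow> ereal" where
  "circle_mean v z r =
     (enn2ereal (\<integral>\<^sup>+ t. indicator {0..2*pi} t * e2ennreal (v (z + of_real r * cis t)) \<partial>lborel)
      - enn2ereal (\<integral>\<^sup>+ t. indicator {0..2*pi} t * e2ennreal (- v (z + of_real r * cis t)) \<partial>lborel))
     / ereal (2 * pi)"

text \<open>Subharmonic on an open set S (Ransford's definition): upper semicontinuous with values
  in [-infinity, infinity), satisfying the local submean inequality.\<close>
definition subharmonic_on :: "complex set \<Rightarrow> (complex \<Rightarrow> ereal) \<Rightarrow> bool" where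
  "subharmonic_on S v \<longleftrightarrow>
     (\<forall>z\<in>S. v z < \<infinity>) \<and> usc_on S v \<and>
     (\<forall>z\<in>S. \<exists>\<rho>>0. \<forall>r. 0 < r \<and> r < \<rho> \<longrightarrow> v z \<le> circle_mean v z r)"

end

theory Submission
  imports Defs "HOL-Complex_Analysis.Cauchy_Integral_Formula"
begin

text \<open>Centre a half-disc of radius R = (1 - r)/4 at r e^{i\<theta>}, with its diameter on the ray and
  the point r e^{i(\<theta>+\<delta>)} inside. On the diameter the hypothesis on the ray bounds v by
  A = -\<sigma> (log (e/(1-r)) - log (5/4)); on the arc the growth bound gives A + B with
  B = O((|C| + \<sigma> + 1) log (e/(1-r))). The harmonic measure of the arc at r e^{i(\<theta>+\<delta>)} is
  O(|\<delta>|/(1-r)), so by the maximum principle v is at most A + O(|\<delta>|/(1-r)) B there, which is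
  below -(\<sigma>/2) log (e/(1-r)) once |\<delta>| < \<tau> (1-r) with \<tau> small compared with
  \<sigma>/(|C| + \<sigma> + 1).\<close>

lemma nn_integral_interval_eq_integral:
  fixes g :: "real \<Rightarrow> real"
  assumes "continuous_on {a..b} g" "\<And>t. t \<in> {a..b} \<Longrightarrow> 0 \<le> g t"
  shows "(\<integral>\<^sup>+ t. indicator {a..b} t * ennreal (g t) \<partial>lborel) = ennreal (integral {a..b} g)"
proof -
  have "(\<integral>\<^sup>+ t. ennreal (indicator {a..b} t * g t) \<partial>lborel) = ennreal (integral {a..b} g)"
    using assms integrable_continuous_interval[OF assms(1)]
    by (intro nn_integral_has_integral_lebesgue) (auto simp: has_integral_integral)
  then show ?thesis
    by (rule subst[rotated], intro nn_integral_cong) (auto split: split_indicator)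
qed

lemma ennreal_max_0: "ennreal (max x 0) = e2ennreal (ereal x)"
  by (simp add: max_def ennreal_neg)

lemma nn_integral_interval_le_integral:
  fixes g :: "real \<Rightarrow> real"
  assumes cont: "continuous_on {a..b} g" and le: "\<And>t. t \<in> {a..b} \<Longrightarrow> f t \<le> ereal (g t)"
  shows "enn2ereal (\<integral>\<^sup>+ t. indicator {a..b} t * e2ennreal (f t) \<partial>lborel)
    \<le> ereal (integral {a..b} (\<lambda>t. max (g t) 0))"
proof -
  have "e2ennreal (f t) \<le> ennreal (max (g t) 0)" if "t \<in> {a..b}" for t
    using e2ennreal_mono[OF le[OF that]] unfolding ennreal_max_0 .
  then have "(\<integral>\<^sup>+ t. indicator {a..b} t * e2ennreal (f t) \<partial>lborel)
      \<le> (\<integral>\<^sup>+ t. indicator {a..b} t * ennreal (max (g t) 0) \<partial>lborel)"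
    by (intro nn_integral_mono) (simp split: split_indicator)
  also have "\<dots> = ennreal (integral {a..b} (\<lambda>t. max (g t) 0))"
    using cont by (intro nn_integral_interval_eq_integral continuous_intros) auto
  finally show ?thesis
    using integral_nonneg[of "\<lambda>t. max (g t) 0" "{a..b}"] cont
    by (simp add: less_eq_ennreal.rep_eq integrable_continuous_interval continuous_intros)
qed

lemma integral_le_nn_integral_interval:
  fixes g :: "real \<Rightarrow> real"
  assumes cont: "continuous_on {a..b} g" and le: "\<And>t. t \<in> {a..b} \<Longrightarrow> ereal (g t) \<le> f t"
  shows "ereal (integral {a..b} (\<lambda>t. max (g t) 0))
    \<le> enn2ereal (\<integral>\<^sup>+ t. indicator {a..b} t * e2ennreal (f t) \<partial>lborel)"
proof -
  have "ennreal (max (g t) 0) \<le> e2ennreal (f t)" if "t \<in> {a..b}" for t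
    using e2ennreal_mono[OF le[OF that]] unfolding ennreal_max_0 .
  then have "(\<integral>\<^sup>+ t. indicator {a..b} t * ennreal (max (g t) 0) \<partial>lborel)
      \<le> (\<integral>\<^sup>+ t. indicator {a..b} t * e2ennreal (f t) \<partial>lborel)"
    by (intro nn_integral_mono) (simp split: split_indicator)
  moreover have "(\<integral>\<^sup>+ t. indicator {a..b} t * ennreal (max (g t) 0) \<partial>lborel)
      = ennreal (integral {a..b} (\<lambda>t. max (g t) 0))"
    using cont by (intro nn_integral_interval_eq_integral continuous_intros) auto
  ultimately show ?thesis
    using integral_nonneg[of "\<lambda>t. max (g t) 0" "{a..b}"] cont
    by (simp add: less_eq_ennreal.rep_eq integrable_continuous_interval continuous_intros)
qed

lemma circle_mean_le_integral:
  fixes g :: "real \<Rightarrow> real"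
  assumes cont: "continuous_on {0..2*pi} g"
    and le: "\<And>t. t \<in> {0..2*pi} \<Longrightarrow> v (z + of_real r * cis t) \<le> ereal (g t)"
  shows "circle_mean v z r \<le> ereal (integral {0..2*pi} g / (2*pi))"
proof -
  have cont': "continuous_on {0..2*pi} (\<lambda>t. - g t)" using cont by (intro continuous_intros)
  have "integral {0..2*pi} g = integral {0..2*pi} (\<lambda>t. max (g t) 0 - max (- g t) 0)"
    by (rule integral_cong) auto
  also have "\<dots> = integral {0..2*pi} (\<lambda>t. max (g t) 0) - integral {0..2*pi} (\<lambda>t. max (- g t) 0)"
    using cont cont' by (intro integral_diff integrable_continuous_interval continuous_intros)
  finally have parts: "integral {0..2*pi} g
      = integral {0..2*pi} (\<lambda>t. max (g t) 0) - integral {0..2*pi} (\<lambda>t. max (- g t) 0)" .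
  have pos: "enn2ereal (\<integral>\<^sup>+ t. indicator {0..2*pi} t * e2ennreal (v (z + of_real r * cis t)) \<partial>lborel)
      \<le> ereal (integral {0..2*pi} (\<lambda>t. max (g t) 0))"
    using nn_integral_interval_le_integral[OF cont le] .
  have neg: "ereal (integral {0..2*pi} (\<lambda>t. max (- g t) 0))
      \<le> enn2ereal (\<integral>\<^sup>+ t. indicator {0..2*pi} t * e2ennreal (- v (z + of_real r * cis t)) \<partial>lborel)"
    using le by (intro integral_le_nn_integral_interval[OF cont'])
      (metis ereal_minus_le_minus uminus_ereal.simps(1))
  show ?thesis
    using ereal_divide_right_mono[OF ereal_minus_mono[OF pos neg], of "ereal (2*pi)"] parts
    unfolding circle_mean_def by simp
qed

lemma Re_holomorphic_has_integral_circle: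
  fixes f :: "complex \<Rightarrow> complex"
  assumes "f holomorphic_on cball z r" "0 < r"
  shows "((\<lambda>t. Re (f (z + of_real r * cis t))) has_integral (2*pi * Re (f z))) {0..2*pi}"
proof -
  have "((\<lambda>u. f u / (u - z)) has_contour_integral (2 * of_real pi * \<i> * f z)) (circlepath z r)"
    using Cauchy_integral_circlepath_simple[OF assms(1)] assms(2) by simp
  then have "((\<lambda>t. f (z + r * cis t) / (z + r * cis t - z) * r * \<i> * cis t)
      has_integral (2 * of_real pi * \<i> * f z)) {0..2*pi}"
    unfolding circlepath_def by (subst (asm) has_contour_integral_part_circlepath_iff) auto
  then have "((\<lambda>t. \<i> * f (z + r * cis t)) has_integral (2 * of_real pi * \<i> * f z)) {0..2*pi}"
    by (rule has_integral_eq[rotated]) (use assms(2) in \<open>auto simp: field_simps\<close>)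
  from has_integral_mult_right[OF this, of "-\<i>"]
  have "((\<lambda>t. f (z + r * cis t)) has_integral (2*pi * f z)) {0..2*pi}"
    by (simp add: ac_simps)
  from has_integral_Re[OF this] show ?thesis by simp
qed

lemma norm_circle_has_integral:
  "((\<lambda>t. (norm (z + of_real r * cis t))\<^sup>2) has_integral (2*pi * ((norm z)\<^sup>2 + r\<^sup>2))) {0..2*pi}"
proof -
  have expand: "(norm (z + of_real r * cis t))\<^sup>2 = ((norm z)\<^sup>2 + r\<^sup>2) + 2 * Re (cnj z * (of_real r * cis t))"
    for t
  proof -
    have "(norm (z + of_real r * cis t))\<^sup>2 = (Re z + r * cos t)\<^sup>2 + (Im z + r * sin t)\<^sup>2"
      by (simp add: cmod_power2)
    also have "\<dots> = (Re z)\<^sup>2 + (Im z)\<^sup>2 + r\<^sup>2 * ((sin t)\<^sup>2 + (cos t)\<^sup>2)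
        + 2 * (Re z * r * cos t + Im z * r * sin t)"
      by algebra
    finally show ?thesis by (simp add: cmod_power2 algebra_simps)
  qed
  have "((\<lambda>t. Re (cnj z * (of_real r * cis t))) has_integral 0) {0..2*pi}"
  proof -
    have "((\<lambda>t. r * (Re z * sin t - Im z * cos t)) has_vector_derivative
        Re (cnj z * (of_real r * cis t))) (at t within {0..2*pi})" for t
      by (auto intro!: derivative_eq_intros simp: has_real_derivative_iff_has_vector_derivative[symmetric]
          algebra_simps)
    from fundamental_theorem_of_calculus[OF _ this] show ?thesis by simp
  qed
  from has_integral_add[OF has_integral_const_real[of "(norm z)\<^sup>2 + r\<^sup>2" 0 "2*pi"]
      has_integral_mult_right[OF this, of 2]]
  show ?thesis unfolding expand by (simp add: algebra_simps)
qed

lemma usc_on_subset: "usc_on S v \<Longrightarrow> T \<subseteq> S \<Longrightarrow> usc_on T v"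
  unfolding usc_on_def by (blast intro: filter_leD[OF at_le])

lemma usc_on_eventually_less:
  assumes "usc_on S v" "\<zeta> \<in> S" "\<Omega> \<subseteq> S" "v \<zeta> < ereal (f \<zeta>)" "(f \<longlongrightarrow> f \<zeta>) (at \<zeta> within \<Omega>)"
  shows "\<forall>\<^sub>F w in at \<zeta> within \<Omega>. v w < ereal (f w)"
proof -
  obtain m where m: "v \<zeta> < ereal m" "m < f \<zeta>" using assms(4) ereal_dense2 by force
  have "\<forall>\<^sub>F w in at \<zeta> within S. v w < ereal m" using assms(1,2) m(1) unfolding usc_on_def by blast
  then have "\<forall>\<^sub>F w in at \<zeta> within \<Omega>. v w < ereal m" using filter_leD[OF at_le[OF assms(3)]] by blast
  moreover have "\<forall>\<^sub>F w in at \<zeta> within \<Omega>. m < f w" using assms(5) m(2) by (rule order_tendstoD)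
  ultimately show ?thesis by eventually_elim (meson less_ereal.simps(1) order.strict_trans)
qed

lemma usc_on_minus_continuous:
  assumes usc: "usc_on S v" and fin: "\<forall>z\<in>S. v z < \<infinity>" and cont: "continuous_on S \<phi>"
  shows "usc_on S (\<lambda>z. v z - ereal (\<phi> z))"
  unfolding usc_on_def
proof (intro ballI allI impI)
  fix z c assume z: "z \<in> S" and lt: "v z - ereal (\<phi> z) < c"
  show "\<forall>\<^sub>F w in at z within S. v w - ereal (\<phi> w) < c"
  proof (cases c)
    case (real d)
    have "v z < ereal (\<phi> z + d)" using lt real by (cases "v z") auto
    moreover have "((\<lambda>w. \<phi> w + d) \<longlongrightarrow> \<phi> z + d) (at z within S)"
      using cont z by (intro tendsto_add tendsto_const) (simp add: continuous_on_def)
    ultimately have "\<forall>\<^sub>F w in at z within S. v w < ereal (\<phi> w + d)"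
      using usc_on_eventually_less[OF usc z order_refl, of "\<lambda>w. \<phi> w + d"] by simp
    then show ?thesis by (rule eventually_mono) (use real in \<open>simp add: ereal_minus_less_iff add.commute\<close>)
  next
    case PInf
    have "v w - ereal (\<phi> w) < \<infinity>" if "w \<in> S" for w
      using fin that by (cases "v w") auto
    then show ?thesis using PInf by (auto simp: eventually_at_filter)
  qed (use lt in simp)
qed

lemma usc_on_attains_max:
  assumes "compact K" "K \<noteq> {}" "usc_on K u"
  shows "\<exists>z\<in>K. \<forall>w\<in>K. u w \<le> u z"
proof (rule ccontr)
  assume no_max: "\<not> ?thesis"
  define M where "M = Sup (u ` K)"
  have below_M: "u z < M" if z: "z \<in> K" for z
  proof -
    obtain w where "w \<in> K" "u z < u w" using no_max z by (auto simp: not_le)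
    then show ?thesis unfolding M_def using SUP_upper[of w K u] order_less_le_trans by blast
  qed
  have "\<forall>z\<in>K. \<exists>c U. u z < c \<and> c < M \<and> open U \<and> z \<in> U \<and> (\<forall>w\<in>U \<inter> K. u w < c)"
  proof
    fix z assume z: "z \<in> K"
    obtain c where c: "u z < c" "c < M" using below_M[OF z] dense by blast
    have "\<forall>\<^sub>F w in at z within K. u w < c" using assms(3) z c(1) unfolding usc_on_def by blast
    then obtain U where U: "open U" "z \<in> U" "\<forall>w\<in>U. w \<noteq> z \<longrightarrow> w \<in> K \<longrightarrow> u w < c"
      unfolding eventually_at_topological by blast
    then have "\<forall>w\<in>U \<inter> K. u w < c" using c(1) by auto
    with c U show "\<exists>c U. u z < c \<and> c < M \<and> open U \<and> z \<in> U \<and> (\<forall>w\<in>U \<inter> K. u w < c)"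
      by blast
  qed
  then obtain c U where cU: "\<And>z. z \<in> K \<Longrightarrow>
      u z < c z \<and> c z < M \<and> open (U z) \<and> z \<in> U z \<and> (\<forall>w\<in>U z \<inter> K. u w < c z)"
    by metis
  obtain T where T: "T \<subseteq> K" "finite T" "K \<subseteq> (\<Union>z\<in>T. U z)"
  proof (rule compactE_image[OF assms(1), of K U])
    show "open (U z)" if "z \<in> K" for z using cU that by blast
    show "K \<subseteq> (\<Union>z\<in>K. U z)" using cU by blast
  qed
  with assms(2) have "T \<noteq> {}" by auto
  have "u w \<le> Max (c ` T)" if w: "w \<in> K" for w
  proof -
    obtain t where "t \<in> T" "w \<in> U t" using T w by blast
    with cU T w have "u w < c t" "c t \<le> Max (c ` T)" by auto
    then show ?thesis by simp
  qed
  then have "M \<le> Max (c ` T)" unfolding M_def by (simp add: SUP_least)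
  moreover have "Max (c ` T) < M" using T \<open>T \<noteq> {}\<close> cU by (subst Max_less_iff) auto
  ultimately show False by simp
qed

lemma usc_on_attains_max_open:
  assumes "open \<Omega>" "bounded \<Omega>" "usc_on \<Omega> u" "z \<in> \<Omega>" "0 \<le> u z"
    and frontier_neg: "\<forall>\<zeta>\<in>frontier \<Omega>. \<forall>\<^sub>F w in at \<zeta> within \<Omega>. u w < 0"
  shows "\<exists>z0\<in>\<Omega>. \<forall>w\<in>\<Omega>. u w \<le> u z0"
proof -
  have "\<forall>\<zeta>\<in>frontier \<Omega>. \<exists>U. open U \<and> \<zeta> \<in> U \<and> (\<forall>w\<in>U \<inter> \<Omega>. u w < 0)"
  proof
    fix \<zeta> assume \<zeta>: "\<zeta> \<in> frontier \<Omega>"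
    then have "\<zeta> \<notin> \<Omega>" using \<open>open \<Omega>\<close> frontier_disjoint_eq by blast
    obtain V where V: "open V" "\<zeta> \<in> V" "\<forall>w\<in>V. w \<noteq> \<zeta> \<longrightarrow> w \<in> \<Omega> \<longrightarrow> u w < 0"
      using frontier_neg \<zeta> unfolding eventually_at_topological by blast
    have "\<forall>w\<in>V \<inter> \<Omega>. u w < 0" using V(3) \<open>\<zeta> \<notin> \<Omega>\<close> by auto
    with V(1,2) show "\<exists>U. open U \<and> \<zeta> \<in> U \<and> (\<forall>w\<in>U \<inter> \<Omega>. u w < 0)"
      by (intro exI[of _ V] conjI)
  qed
  then obtain U where U: "\<And>\<zeta>. \<zeta> \<in> frontier \<Omega> \<Longrightarrow> open (U \<zeta>) \<and> \<zeta> \<in> U \<zeta> \<and> (\<forall>w\<in>U \<zeta> \<inter> \<Omega>. u w < 0)"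
    by metis
  define W where "W = (\<Union>\<zeta>\<in>frontier \<Omega>. U \<zeta>)"
  have neg: "u w < 0" if "w \<in> W \<inter> \<Omega>" for w using U that unfolding W_def by blast
  define K where "K = closure \<Omega> - W"
  have "open W" using U unfolding W_def by auto
  then have "compact K"
    unfolding K_def using assms(2) by (intro compact_eq_bounded_closed[THEN iffD2]) (auto intro: bounded_subset)
  have "frontier \<Omega> \<subseteq> W" using U unfolding W_def by blast
  then have "K \<subseteq> \<Omega>" using \<open>open \<Omega>\<close> unfolding K_def by (auto simp: frontier_def interior_open)
  have "z \<in> K" using neg assms(4,5) closure_subset unfolding K_def by fastforce
  then obtain z0 where z0: "z0 \<in> K" "\<forall>w\<in>K. u w \<le> u z0"
    using usc_on_attains_max[OF \<open>compact K\<close> _ usc_on_subset[OF assms(3) \<open>K \<subseteq> \<Omega>\<close>]] by blast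
  have "u w \<le> u z0" if w: "w \<in> \<Omega>" for w
  proof (cases "w \<in> W")
    case True
    then have "u w < u z" using neg w assms(5) by force
    with z0 \<open>z \<in> K\<close> show ?thesis by fastforce
  next
    case False
    then show ?thesis using z0 w closure_subset unfolding K_def by blast
  qed
  with z0 \<open>K \<subseteq> \<Omega>\<close> show ?thesis by blast
qed

lemma circle_mean_le_Re_holomorphic_minus_norm_sq:
  fixes G :: "complex \<Rightarrow> complex"
  assumes hol: "G holomorphic_on cball z r" and "0 < r"
    and le: "\<And>w. w \<in> cball z r \<Longrightarrow> v w \<le> ereal (Re (G w) - \<eta> * (norm w)\<^sup>2 + M)"
  shows "circle_mean v z r \<le> ereal (Re (G z) - \<eta> * ((norm z)\<^sup>2 + r\<^sup>2) + M)"
proof -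
  define g where "g t = Re (G (z + of_real r * cis t)) - \<eta> * (norm (z + of_real r * cis t))\<^sup>2 + M" for t
  have on_circle: "z + of_real r * cis t \<in> cball z r" for t
    using \<open>0 < r\<close> by (simp add: dist_norm norm_mult)
  have "continuous_on {0..2*pi} (\<lambda>t. G (z + of_real r * cis t))"
    using on_circle by (intro continuous_on_compose2[OF holomorphic_on_imp_continuous_on[OF hol]]
        continuous_intros) auto
  then have cont: "continuous_on {0..2*pi} g" unfolding g_def by (intro continuous_intros)
  have const: "((\<lambda>t. M) has_integral M * (2*pi)) {0..2*pi}"
    using has_integral_const_real[of M 0 "2*pi"] by (simp add: mult.commute)
  have "(g has_integral 2*pi * Re (G z) - \<eta> * (2*pi * ((norm z)\<^sup>2 + r\<^sup>2)) + M * (2*pi)) {0..2*pi}"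
    unfolding g_def
    by (intro has_integral_add has_integral_diff has_integral_mult_right norm_circle_has_integral
        Re_holomorphic_has_integral_circle hol \<open>0 < r\<close> const)
  then have "integral {0..2*pi} g / (2*pi) = Re (G z) - \<eta> * ((norm z)\<^sup>2 + r\<^sup>2) + M"
    by (simp add: integral_unique field_simps)
  moreover have "circle_mean v z r \<le> ereal (integral {0..2*pi} g / (2*pi))"
    by (rule circle_mean_le_integral[OF cont]) (use le on_circle in \<open>simp add: g_def\<close>)
  ultimately show ?thesis by simp
qed

text \<open>Subtracting the strictly superharmonic function Re G - \<eta> |z|^2 turns the
  sub-mean value inequality into a strict one, so the difference has no interior maximum.\<close>
lemma subharmonic_minus_strict_superharmonic_no_max:
  fixes G :: "complex \<Rightarrow> complex"
  assumes sh: "subharmonic_on S v" and "open \<Omega>" "\<Omega> \<subseteq> S" and hol: "G holomorphic_on \<Omega>"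
    and "\<eta> > 0" and z0: "z0 \<in> \<Omega>" "v z0 \<noteq> -\<infinity>"
  shows "\<exists>w\<in>\<Omega>. v z0 - ereal (Re (G z0) - \<eta> * (norm z0)\<^sup>2) < v w - ereal (Re (G w) - \<eta> * (norm w)\<^sup>2)"
proof (rule ccontr)
  assume "\<not> ?thesis"
  then have max: "v w - ereal (Re (G w) - \<eta> * (norm w)\<^sup>2) \<le> v z0 - ereal (Re (G z0) - \<eta> * (norm z0)\<^sup>2)"
    if "w \<in> \<Omega>" for w
    using that by (auto simp: not_less)
  have "v z0 < \<infinity>" using sh z0 \<open>\<Omega> \<subseteq> S\<close> unfolding subharmonic_on_def by blast
  with z0(2) obtain y where y: "v z0 = ereal y" by (cases "v z0") auto
  define M where "M = y - (Re (G z0) - \<eta> * (norm z0)\<^sup>2)"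
  have v_le: "v w \<le> ereal (Re (G w) - \<eta> * (norm w)\<^sup>2 + M)" if "w \<in> \<Omega>" for w
    using max[OF that] unfolding y M_def by (cases "v w") auto
  obtain \<rho> where \<rho>: "\<rho> > 0" "\<And>r. 0 < r \<Longrightarrow> r < \<rho> \<Longrightarrow> v z0 \<le> circle_mean v z0 r"
    using sh z0 \<open>\<Omega> \<subseteq> S\<close> unfolding subharmonic_on_def by blast
  obtain \<epsilon> where \<epsilon>: "\<epsilon> > 0" "ball z0 \<epsilon> \<subseteq> \<Omega>" using \<open>open \<Omega>\<close> z0 open_contains_ball by blast
  define r where "r = min \<rho> \<epsilon> / 2"
  have r: "0 < r" "r < \<rho>" "cball z0 r \<subseteq> \<Omega>" unfolding r_def using \<rho> \<epsilon> by auto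
  have "circle_mean v z0 r \<le> ereal (Re (G z0) - \<eta> * ((norm z0)\<^sup>2 + r\<^sup>2) + M)"
    using r v_le by (intro circle_mean_le_Re_holomorphic_minus_norm_sq holomorphic_on_subset[OF hol]) auto
  also have "\<dots> < v z0" using y \<open>\<eta> > 0\<close> r(1) unfolding M_def by (simp add: algebra_simps)
  finally show False using \<rho>(2)[OF r(1,2)] by simp
qed

lemma subharmonic_less_Re_holomorphic_minus_norm_sq:
  fixes G :: "complex \<Rightarrow> complex"
  assumes sh: "subharmonic_on S v" and "open \<Omega>" "bounded \<Omega>" "\<Omega> \<subseteq> S"
    and hol: "G holomorphic_on \<Omega>" and "\<eta> > 0"
    and frontier: "\<forall>\<zeta>\<in>frontier \<Omega>. \<forall>\<^sub>F w in at \<zeta> within \<Omega>. v w < ereal (Re (G w) - \<eta> * (norm w)\<^sup>2)"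
    and z: "z \<in> \<Omega>"
  shows "v z < ereal (Re (G z) - \<eta> * (norm z)\<^sup>2)"
proof (rule ccontr)
  define u where "u w = v w - ereal (Re (G w) - \<eta> * (norm w)\<^sup>2)" for w
  assume "\<not> ?thesis"
  then have "0 \<le> u z" unfolding u_def by (cases "v z") auto
  have fin: "\<forall>w\<in>S. v w < \<infinity>" and "usc_on S v" using sh unfolding subharmonic_on_def by blast+
  have "usc_on \<Omega> u" unfolding u_def
    using usc_on_subset[OF \<open>usc_on S v\<close> \<open>\<Omega> \<subseteq> S\<close>] fin \<open>\<Omega> \<subseteq> S\<close> holomorphic_on_imp_continuous_on[OF hol]
    by (intro usc_on_minus_continuous continuous_intros) auto
  moreover have "\<forall>\<zeta>\<in>frontier \<Omega>. \<forall>\<^sub>F w in at \<zeta> within \<Omega>. u w < 0"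
    using frontier unfolding u_def by (auto elim!: eventually_mono simp: ereal_minus_less_iff)
  ultimately obtain z0 where z0: "z0 \<in> \<Omega>" "\<forall>w\<in>\<Omega>. u w \<le> u z0"
    using usc_on_attains_max_open[of \<Omega> u z] \<open>open \<Omega>\<close> \<open>bounded \<Omega>\<close> z \<open>0 \<le> u z\<close> by blast
  have "v z0 \<noteq> -\<infinity>" using z0 z \<open>0 \<le> u z\<close> unfolding u_def by fastforce
  then obtain w where "w \<in> \<Omega>" "u z0 < u w"
    using subharmonic_minus_strict_superharmonic_no_max[OF sh \<open>open \<Omega>\<close> \<open>\<Omega> \<subseteq> S\<close> hol \<open>\<eta> > 0\<close> z0(1)]
    unfolding u_def by blast
  with z0(2) show False by (simp add: not_le[symmetric])
qed

lemma subharmonic_le_Re_holomorphic: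
  fixes F :: "complex \<Rightarrow> complex"
  assumes sh: "subharmonic_on S v" and "open \<Omega>" "bounded \<Omega>" "\<Omega> \<subseteq> S"
    and hol: "F holomorphic_on \<Omega>"
    and frontier: "\<forall>\<zeta>\<in>frontier \<Omega>. \<forall>\<^sub>F w in at \<zeta> within \<Omega>. v w < ereal (Re (F w))"
    and z: "z \<in> \<Omega>"
  shows "v z \<le> ereal (Re (F z))"
proof (rule ccontr)
  assume "\<not> ?thesis"
  then obtain x where x: "v z = ereal x" "Re (F z) < x"
    using sh z \<open>\<Omega> \<subseteq> S\<close> unfolding subharmonic_on_def by (cases "v z") auto
  define c where "c = (x - Re (F z)) / 2"
  have "c > 0" using x unfolding c_def by simp
  obtain D where D: "\<forall>w\<in>closure \<Omega>. norm w \<le> D"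
    using bounded_closure[OF \<open>bounded \<Omega>\<close>] bounded_iff by blast
  define \<eta> where "\<eta> = c / (D\<^sup>2 + 1)"
  have D1: "0 < D\<^sup>2 + 1" using zero_le_power2[of D] by linarith
  then have "\<eta> > 0" unfolding \<eta>_def using \<open>c > 0\<close> by simp
  then have "0 \<le> \<eta> * (norm z)\<^sup>2" by simp
  have small: "\<eta> * (norm w)\<^sup>2 < c" if "w \<in> \<Omega>" for w
  proof -
    have "(norm w)\<^sup>2 \<le> D\<^sup>2" using D that closure_subset by (force intro: power_mono)
    then have "\<eta> * (norm w)\<^sup>2 \<le> \<eta> * D\<^sup>2" using \<open>\<eta> > 0\<close> by simp
    also have "\<dots> < c" using \<open>c > 0\<close> D1 unfolding \<eta>_def by (simp add: field_simps)
    finally show ?thesis .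
  qed
  define G where "G w = F w + of_real c" for w
  have "\<forall>\<zeta>\<in>frontier \<Omega>. \<forall>\<^sub>F w in at \<zeta> within \<Omega>. v w < ereal (Re (G w) - \<eta> * (norm w)\<^sup>2)"
  proof
    fix \<zeta> assume "\<zeta> \<in> frontier \<Omega>"
    with frontier have "\<forall>\<^sub>F w in at \<zeta> within \<Omega>. v w < ereal (Re (F w)) \<and> w \<in> \<Omega>"
      by (auto intro: eventually_conj simp: eventually_at_filter)
    then show "\<forall>\<^sub>F w in at \<zeta> within \<Omega>. v w < ereal (Re (G w) - \<eta> * (norm w)\<^sup>2)"
      by eventually_elim (use small in \<open>fastforce simp: G_def intro: order.strict_trans\<close>)
  qed
  moreover have "G holomorphic_on \<Omega>" unfolding G_def using hol by (intro holomorphic_intros)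
  ultimately have "v z < ereal (Re (G z) - \<eta> * (norm z)\<^sup>2)"
    using subharmonic_less_Re_holomorphic_minus_norm_sq[OF sh \<open>open \<Omega>\<close> \<open>bounded \<Omega>\<close> \<open>\<Omega> \<subseteq> S\<close> _ \<open>\<eta> > 0\<close> _ z]
    by blast
  moreover have "Re (G z) - \<eta> * (norm z)\<^sup>2 \<le> x"
    using x(2) \<open>0 \<le> \<eta> * (norm z)\<^sup>2\<close> unfolding G_def c_def by (simp; argo)
  ultimately show False using x by simp
qed

text \<open>(2/\<pi>) cayley_arg R is the harmonic measure of the arc |w| = R, Im w > 0 in the upper
  half-disc of radius R: it vanishes on the diameter and equals 1 on the arc.\<close>
definition cayley_arg :: "real \<Rightarrow> complex \<Rightarrow> real" where
  "cayley_arg R w = Im (Ln ((of_real R + w) / (of_real R - w)))"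

lemma Re_cayley: "Re ((of_real R + w) / (of_real R - w)) = (R\<^sup>2 - (norm w)\<^sup>2) / (norm (of_real R - w))\<^sup>2"
  unfolding Re_divide cmod_power2 by (simp add: power2_eq_square algebra_simps)

lemma Im_cayley: "Im ((of_real R + w) / (of_real R - w)) = 2 * R * Im w / (norm (of_real R - w))\<^sup>2"
  unfolding Im_divide cmod_power2 by (simp add: power2_eq_square algebra_simps)

lemma cayley_denom_nonzero: "norm w < R \<or> Im w \<noteq> 0 \<Longrightarrow> of_real R - w \<noteq> 0"
  by auto

lemma Im_cayley_pos: "0 < R \<Longrightarrow> 0 < Im w \<Longrightarrow> 0 < Im ((of_real R + w) / (of_real R - w))"
  unfolding Im_cayley using cayley_denom_nonzero[of w R] by simp

lemma cayley_arg_eq_arctan: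
  assumes "norm w < R"
  shows "cayley_arg R w = arctan (2 * R * Im w / (R\<^sup>2 - (norm w)\<^sup>2))"
proof -
  define W where "W = (of_real R + w) / (of_real R - w)"
  have d: "0 < (norm (of_real R - w))\<^sup>2" using cayley_denom_nonzero[of w R] assms by simp
  have "(norm w)\<^sup>2 < R\<^sup>2" using assms by (simp add: power_strict_mono)
  with d have "0 < Re W" unfolding W_def Re_cayley by simp
  moreover from this have "W \<noteq> 0" by auto
  ultimately have "Im (Ln W) = arctan (Im W / Re W)"
    using Arg_eq_Im_Ln arg_conv_arctan by metis
  also have "Im W / Re W = 2 * R * Im w / (R\<^sup>2 - (norm w)\<^sup>2)"
    unfolding W_def Re_cayley Im_cayley using d by simp
  finally show ?thesis unfolding cayley_arg_def W_def .
qed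

lemma cayley_arg_nonneg:
  assumes "norm w < R" "0 \<le> Im w"
  shows "0 \<le> cayley_arg R w"
proof -
  have "0 < R" using assms(1) norm_ge_zero[of w] by linarith
  moreover have "(norm w)\<^sup>2 < R\<^sup>2" using assms(1) by (simp add: power_strict_mono)
  ultimately show ?thesis unfolding cayley_arg_eq_arctan[OF assms(1)] using assms(2)
    by (simp add: divide_nonneg_pos)
qed

lemma cayley_arg_le:
  assumes "0 < R" "norm w \<le> R / 2" "0 \<le> Im w"
  shows "cayley_arg R w \<le> 8 * norm w / (3 * R)"
proof -
  have "(norm w)\<^sup>2 \<le> (R / 2)\<^sup>2" using assms(2) by (intro power_mono) auto
  then have denom: "3 * R\<^sup>2 / 4 \<le> R\<^sup>2 - (norm w)\<^sup>2" by (simp add: power_divide)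
  have "R\<^sup>2 > 0" using assms(1) by simp
  have "norm w < R" using assms(1,2) by linarith
  then have "cayley_arg R w \<le> 2 * R * Im w / (R\<^sup>2 - (norm w)\<^sup>2)"
    unfolding cayley_arg_eq_arctan[OF \<open>norm w < R\<close>] using assms denom \<open>R\<^sup>2 > 0\<close>
    by (intro arctan_le_self divide_nonneg_pos) (auto simp: power_strict_mono)
  also have "\<dots> \<le> 2 * R * norm w / (3 * R\<^sup>2 / 4)"
    using assms abs_Im_le_cmod[of w] denom \<open>R\<^sup>2 > 0\<close>
    by (intro frac_le mult_left_mono) auto
  also have "\<dots> = 8 * norm w / (3 * R)" by (simp add: power2_eq_square field_simps)
  finally show ?thesis .
qed

lemma cayley_arg_on_circle:
  assumes "norm w = R" "0 < Im w"
  shows "cayley_arg R w = pi / 2"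
proof -
  have "w \<noteq> 0" using assms(2) by auto
  then have "0 < R" using assms(1) by auto
  then have "0 < Im ((of_real R + w) / (of_real R - w))" by (intro Im_cayley_pos assms)
  moreover have "Re ((of_real R + w) / (of_real R - w)) = 0" unfolding Re_cayley assms(1) by simp
  ultimately show ?thesis unfolding cayley_arg_def by (subst Im_Ln_eq_pi_half) auto
qed

lemma frontier_half_disc:
  fixes c u :: complex
  assumes u: "norm u = 1"
    and \<zeta>: "\<zeta> \<in> frontier {z. norm (z - c) < R \<and> 0 < Im (u * (z - c))}"
  shows "(\<exists>t. \<bar>t\<bar> \<le> R \<and> \<zeta> = c + of_real t * cnj u) \<or> (norm (\<zeta> - c) = R \<and> 0 < Im (u * (\<zeta> - c)))"
proof -
  let ?\<Omega> = "{z. norm (z - c) < R \<and> 0 < Im (u * (z - c))}"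
  have "open ?\<Omega>" by (intro open_Collect_conj open_Collect_less continuous_intros)
  then have "\<zeta> \<notin> ?\<Omega>" using \<zeta> frontier_disjoint_eq by blast
  have "closed {z. norm (z - c) \<le> R \<and> 0 \<le> Im (u * (z - c))}"
    by (intro closed_Collect_conj closed_Collect_le continuous_intros)
  then have "closure ?\<Omega> \<subseteq> {z. norm (z - c) \<le> R \<and> 0 \<le> Im (u * (z - c))}"
    by (intro closure_minimal) auto
  with \<zeta> have le: "norm (\<zeta> - c) \<le> R" "0 \<le> Im (u * (\<zeta> - c))" by (auto simp: frontier_def)
  show ?thesis
  proof (cases "Im (u * (\<zeta> - c)) = 0")
    case True
    define t where "t = Re (u * (\<zeta> - c))"
    have "cnj u * u = 1" using u by (simp add: complex_norm_square[symmetric] mult.commute)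
    then have "\<zeta> = c + cnj u * (u * (\<zeta> - c))" by (simp add: mult.assoc[symmetric])
    also have "u * (\<zeta> - c) = of_real t" using True unfolding t_def by (simp add: complex_eq_iff)
    finally have "\<zeta> = c + of_real t * cnj u" by (simp add: mult.commute)
    moreover have "\<bar>t\<bar> \<le> R"
      using abs_Re_le_cmod[of "u * (\<zeta> - c)"] le(1) u unfolding t_def by (simp add: norm_mult)
    ultimately show ?thesis by blast
  next
    case False
    with le \<open>\<zeta> \<notin> ?\<Omega>\<close> show ?thesis by auto
  qed
qed

lemma holomorphic_on_Ln_cayley:
  assumes "0 < R"
  shows "(\<lambda>z. Ln ((of_real R + u * (z - c)) / (of_real R - u * (z - c)))) holomorphic_on {z. 0 < Im (u * (z - c))}"
proof -
  have "of_real R - u * (z - c) \<noteq> 0"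
    and "(of_real R + u * (z - c)) / (of_real R - u * (z - c)) \<notin> \<real>\<^sub>\<le>\<^sub>0" if "0 < Im (u * (z - c))" for z
    using cayley_denom_nonzero[of "u * (z - c)" R] Im_cayley_pos[OF assms, of "u * (z - c)"] that
    by (auto simp: complex_nonpos_Reals_iff)
  then show ?thesis by (intro holomorphic_intros holomorphic_on_Ln') auto
qed

lemma tendsto_cayley_arg:
  assumes "0 < R" "0 < Im (u * (\<zeta> - c))"
  shows "((\<lambda>z. cayley_arg R (u * (z - c))) \<longlongrightarrow> cayley_arg R (u * (\<zeta> - c))) (at \<zeta> within \<Omega>)"
proof -
  let ?H = "{z. 0 < Im (u * (z - c))}"
  have "open ?H" by (intro open_Collect_less continuous_intros)
  moreover have "continuous_on ?H (\<lambda>z. Ln ((of_real R + u * (z - c)) / (of_real R - u * (z - c))))"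
    using holomorphic_on_Ln_cayley[OF assms(1)] by (rule holomorphic_on_imp_continuous_on)
  ultimately have "isCont (\<lambda>z. Ln ((of_real R + u * (z - c)) / (of_real R - u * (z - c)))) \<zeta>"
    using assms(2) continuous_on_eq_continuous_at by blast
  from tendsto_mono[OF at_le[OF subset_UNIV] this[unfolded isCont_def]] show ?thesis
    unfolding cayley_arg_def by (rule tendsto_Im)
qed

lemma half_disc_majorant:
  fixes v :: "complex \<Rightarrow> ereal" and c u :: complex
  assumes sh: "subharmonic_on S v" and "cball c R \<subseteq> S" and u: "norm u = 1" and "0 < R" "0 \<le> B"
    and diameter: "\<And>t. \<bar>t\<bar> \<le> R \<Longrightarrow> v (c + of_real t * cnj u) < ereal A"
    and arc: "\<And>z. norm (z - c) = R \<Longrightarrow> 0 < Im (u * (z - c)) \<Longrightarrow> v z < ereal (A + B)"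
    and z: "norm (z - c) < R" "0 < Im (u * (z - c))"
  shows "v z \<le> ereal (A + B * (2/pi) * cayley_arg R (u * (z - c)))"
proof -
  define \<Omega> where "\<Omega> = {z. norm (z - c) < R \<and> 0 < Im (u * (z - c))}"
  define Lc where "Lc z = Ln ((of_real R + u * (z - c)) / (of_real R - u * (z - c)))" for z
  define F where "F z = of_real A + of_real (B * (2/pi)) * (- \<i> * Lc z)" for z
  have ReF: "Re (F z) = A + B * (2/pi) * cayley_arg R (u * (z - c))" for z
    by (simp add: F_def Lc_def cayley_arg_def)
  have "open \<Omega>" unfolding \<Omega>_def by (intro open_Collect_conj open_Collect_less continuous_intros)
  have "Lc holomorphic_on \<Omega>" unfolding Lc_def
    by (rule holomorphic_on_subset[OF holomorphic_on_Ln_cayley[OF \<open>0 < R\<close>]]) (auto simp: \<Omega>_def)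
  then have "F holomorphic_on \<Omega>" unfolding F_def by (intro holomorphic_intros)
  have "\<Omega> \<subseteq> ball c R" unfolding \<Omega>_def by (auto simp: dist_norm norm_minus_commute)
  then have "bounded \<Omega>" using bounded_ball bounded_subset by blast
  have "\<Omega> \<subseteq> S" using \<open>\<Omega> \<subseteq> ball c R\<close> ball_subset_cball \<open>cball c R \<subseteq> S\<close> by blast
  have usc: "usc_on S v" using sh unfolding subharmonic_on_def by blast
  have "\<forall>\<zeta>\<in>frontier \<Omega>. \<forall>\<^sub>F w in at \<zeta> within \<Omega>. v w < ereal (Re (F w))"
  proof
    fix \<zeta> assume \<zeta>: "\<zeta> \<in> frontier \<Omega>"
    consider t where "\<bar>t\<bar> \<le> R" "\<zeta> = c + of_real t * cnj u"
      | "norm (\<zeta> - c) = R" "0 < Im (u * (\<zeta> - c))"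
      using frontier_half_disc[OF u \<zeta>[unfolded \<Omega>_def]] by blast
    then show "\<forall>\<^sub>F w in at \<zeta> within \<Omega>. v w < ereal (Re (F w))"
    proof cases
      case (1 t)
      have "\<zeta> \<in> S" using 1 u \<open>cball c R \<subseteq> S\<close> by (auto simp: dist_norm norm_mult)
      with 1 have "\<forall>\<^sub>F w in at \<zeta> within \<Omega>. v w < ereal A"
        using usc_on_eventually_less[OF usc _ \<open>\<Omega> \<subseteq> S\<close>, of \<zeta> "\<lambda>_. A"] diameter by simp
      moreover have "\<forall>\<^sub>F w in at \<zeta> within \<Omega>. A \<le> Re (F w)"
        unfolding eventually_at_filter ReF \<Omega>_def using \<open>0 \<le> B\<close> cayley_arg_nonneg u
        by (auto simp: norm_mult)
      ultimately show ?thesis by eventually_elim (meson ereal_less_eq(3) order_less_le_trans)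
    next
      case 2
      have "\<zeta> \<in> S" using 2 \<open>cball c R \<subseteq> S\<close> by (auto simp: dist_norm norm_minus_commute)
      have "cayley_arg R (u * (\<zeta> - c)) = pi / 2"
        using 2 u by (intro cayley_arg_on_circle) (auto simp: norm_mult)
      then have "v \<zeta> < ereal (Re (F \<zeta>))" using arc[OF 2] unfolding ReF by (simp only:) simp
      moreover have "((\<lambda>w. Re (F w)) \<longlongrightarrow> Re (F \<zeta>)) (at \<zeta> within \<Omega>)"
        unfolding ReF using 2(2) \<open>0 < R\<close> by (intro tendsto_intros tendsto_cayley_arg)
      ultimately show ?thesis
        using usc_on_eventually_less[OF usc \<open>\<zeta> \<in> S\<close> \<open>\<Omega> \<subseteq> S\<close>, of "\<lambda>w. Re (F w)"] by simp
    qed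
  qed
  moreover have "z \<in> \<Omega>" using z unfolding \<Omega>_def by simp
  ultimately show ?thesis
    using subharmonic_le_Re_holomorphic[OF sh \<open>open \<Omega>\<close> \<open>bounded \<Omega>\<close> \<open>\<Omega> \<subseteq> S\<close> \<open>F holomorphic_on \<Omega>\<close>]
    unfolding ReF by blast
qed

lemma norm_cis_minus_one_le: "norm (cis d - 1) \<le> \<bar>d\<bar>"
proof -
  have "(norm (cis d - 1))\<^sup>2 = (cos d - 1)\<^sup>2 + (sin d)\<^sup>2" by (simp add: cmod_power2)
  also have "\<dots> = 2 - 2 * cos d" by (simp add: power2_eq_square algebra_simps)
  also have "\<dots> = (2 * sin (d/2))\<^sup>2" using cos_double_sin[of "d/2"] by (simp add: power2_eq_square)
  finally have "norm (cis d - 1) = \<bar>2 * sin (d/2)\<bar>" by (metis norm_ge_zero real_sqrt_abs real_sqrt_unique)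
  also have "\<dots> \<le> \<bar>d\<bar>" using abs_sin_x_le_abs_x[of "d/2"] by (simp add: abs_mult)
  finally show ?thesis .
qed

lemma two_constant_estimate_off_ray:
  fixes v :: "complex \<Rightarrow> ereal"
  assumes sh: "subharmonic_on S v" and "cball (of_real r * cis \<theta>) R \<subseteq> S"
    and "0 < R" "0 \<le> B" "0 < r"
    and \<delta>: "\<delta> \<noteq> 0" "\<bar>\<delta>\<bar> < pi" "r * \<bar>\<delta>\<bar> \<le> R / 2"
    and diameter: "\<And>\<rho>. \<bar>\<rho> - r\<bar> \<le> R \<Longrightarrow> v (of_real \<rho> * cis \<theta>) < ereal A"
    and arc: "\<And>z. norm (z - of_real r * cis \<theta>) = R \<Longrightarrow> v z < ereal (A + B)"
  shows "v (of_real r * cis (\<theta> + \<delta>)) \<le> ereal (A + B * (8 * r * \<bar>\<delta>\<bar> / (3 * R)))"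
proof -
  define c where "c = of_real r * cis \<theta>"
  define s where "s = sgn \<delta>"
  define u where "u = of_real s * cis (- \<theta>)"
    \<comment> \<open>rotates the ray onto the positive reals and the side of \<theta> + \<delta> into the upper half-plane\<close>
  have s: "\<bar>s\<bar> = 1" "s * s = 1" using \<delta>(1) unfolding s_def by (auto simp: sgn_if)
  have u: "norm u = 1" "cnj u = of_real s * cis \<theta>" using s unfolding u_def by (auto simp: norm_mult complex_eq_iff)
  define \<xi> where "\<xi> = u * (of_real r * cis (\<theta> + \<delta>) - c)"
  have \<xi>: "\<xi> = of_real (s * r) * (cis \<delta> - 1)"
    unfolding \<xi>_def u_def c_def by (simp add: algebra_simps cis_mult)
  have "norm \<xi> \<le> r * \<bar>\<delta>\<bar>"
    unfolding \<xi> using s \<open>0 < r\<close> norm_cis_minus_one_le[of \<delta>] by (simp add: norm_mult abs_mult)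
  with \<delta>(3) \<open>0 < R\<close> have norm_\<xi>: "norm \<xi> \<le> R / 2" "norm \<xi> < R" by linarith+
  have "0 < s * sin \<delta>"
    using \<delta>(1,2) sin_gt_zero[of \<delta>] sin_gt_zero[of "- \<delta>"] unfolding s_def by (auto simp: sgn_if)
  then have Im_\<xi>: "0 < Im \<xi>" unfolding \<xi> using \<open>0 < r\<close> by (simp add: mult.assoc mult.left_commute)
  have "v (of_real r * cis (\<theta> + \<delta>)) \<le> ereal (A + B * (2/pi) * cayley_arg R \<xi>)"
    unfolding \<xi>_def
  proof (rule half_disc_majorant[OF sh \<open>cball _ R \<subseteq> S\<close>[folded c_def] u(1) \<open>0 < R\<close> \<open>0 \<le> B\<close>])
    show "v (c + of_real t * cnj u) < ereal A" if "\<bar>t\<bar> \<le> R" for t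
      using diameter[of "r + s * t"] that s unfolding u(2) c_def by (simp add: abs_mult algebra_simps)
    show "v z < ereal (A + B)" if "norm (z - c) = R" for z using arc that unfolding c_def by blast
    show "norm (of_real r * cis (\<theta> + \<delta>) - c) < R"
      using norm_\<xi> u(1) unfolding \<xi>_def by (simp add: norm_mult)
    show "0 < Im (u * (of_real r * cis (\<theta> + \<delta>) - c))" using Im_\<xi> unfolding \<xi>_def .
  qed
  also have "B * (2/pi) * cayley_arg R \<xi> \<le> B * (8 * r * \<bar>\<delta>\<bar> / (3 * R))"
  proof -
    have "0 \<le> cayley_arg R \<xi>" using cayley_arg_nonneg norm_\<xi> Im_\<xi> by simp
    then have "(2/pi) * cayley_arg R \<xi> \<le> cayley_arg R \<xi>"
      using pi_ge_two by (simp add: field_simps mult_right_mono)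
    also have "\<dots> \<le> 8 * norm \<xi> / (3 * R)" using cayley_arg_le \<open>0 < R\<close> norm_\<xi> Im_\<xi> by simp
    also have "\<dots> \<le> 8 * r * \<bar>\<delta>\<bar> / (3 * R)"
      using \<open>norm \<xi> \<le> r * \<bar>\<delta>\<bar>\<close> \<open>0 < R\<close> by (simp add: divide_right_mono)
    finally show ?thesis using mult_left_mono[OF _ \<open>0 \<le> B\<close>] by (simp only: mult.assoc)
  qed
  finally show ?thesis by simp
qed

lemma ln_exp1_div_le:
  fixes \<kappa> \<rho> r :: real
  assumes "0 < \<kappa>" "\<rho> < 1" "r < 1" "1 - r \<le> \<kappa> * (1 - \<rho>)"
  shows "ln (exp 1 / (1 - \<rho>)) \<le> ln (exp 1 / (1 - r)) + ln \<kappa>"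
proof -
  have "ln (1 - r) \<le> ln (\<kappa> * (1 - \<rho>))" using assms by (subst ln_le_cancel_iff) auto
  also have "\<dots> = ln \<kappa> + ln (1 - \<rho>)" using assms by (simp add: ln_mult)
  finally show ?thesis using assms by (simp add: ln_div)
qed

lemma ray_bound_near_ray:
  assumes ray: "\<forall>\<rho>. r0 < \<rho> \<and> \<rho> < 1 \<longrightarrow> v (of_real \<rho> * cis \<theta>) < ereal (- \<sigma> * ln (exp 1 / (1 - \<rho>)))"
    and "0 < \<sigma>" "r < 1" "r0 < r - (1 - r) / 4" "\<bar>\<rho> - r\<bar> \<le> (1 - r) / 4"
  shows "v (of_real \<rho> * cis \<theta>) < ereal (- \<sigma> * (ln (exp 1 / (1 - r)) - ln (5/4)))"
proof -
  have "\<rho> < 1" "r0 < \<rho>" "1 - \<rho> \<le> 5/4 * (1 - r)" using assms(3-5) unfolding abs_le_iff by argo+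
  then have "ln (exp 1 / (1 - r)) \<le> ln (exp 1 / (1 - \<rho>)) + ln (5/4)"
    using assms(3) by (intro ln_exp1_div_le) auto
  then have "- \<sigma> * ln (exp 1 / (1 - \<rho>)) \<le> - \<sigma> * (ln (exp 1 / (1 - r)) - ln (5/4))"
    using \<open>0 < \<sigma>\<close> by (simp add: mult_left_mono)
  moreover have "v (of_real \<rho> * cis \<theta>) < ereal (- \<sigma> * ln (exp 1 / (1 - \<rho>)))"
    using ray \<open>\<rho> < 1\<close> \<open>r0 < \<rho>\<close> by blast
  ultimately show ?thesis using order_less_le_trans by fastforce
qed

lemma growth_bound_near_circle:
  assumes growth: "\<forall>z\<in>unit_disc. v z \<le> ereal (C * ln (exp 1 / (1 - norm z)))"
    and "r < 1" "norm z \<le> r + (1 - r) / 4"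
  shows "v z \<le> ereal (\<bar>C\<bar> * (ln (exp 1 / (1 - r)) + ln (4/3)))"
proof -
  have "norm z < 1" "1 - r \<le> 4/3 * (1 - norm z)" using assms(2,3) by argo+
  moreover have "ln (1 - norm z) \<le> 1"
    using ln_le_minus_one[of "1 - norm z"] \<open>norm z < 1\<close> norm_ge_zero[of z] by linarith
  ultimately have "0 \<le> ln (exp 1 / (1 - norm z))" by (simp add: ln_div)
  have "v z \<le> ereal (C * ln (exp 1 / (1 - norm z)))"
    using growth \<open>norm z < 1\<close> by (simp add: unit_disc_def)
  also have "C * ln (exp 1 / (1 - norm z)) \<le> \<bar>C\<bar> * ln (exp 1 / (1 - norm z))"
    using \<open>0 \<le> ln (exp 1 / (1 - norm z))\<close> by (intro mult_right_mono) auto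
  also have "\<dots> \<le> \<bar>C\<bar> * (ln (exp 1 / (1 - r)) + ln (4/3))"
    using assms(2) \<open>norm z < 1\<close> \<open>1 - r \<le> 4/3 * (1 - norm z)\<close>
    by (intro mult_left_mono ln_exp1_div_le) auto
  finally show ?thesis by simp
qed

lemma cball_subset_unit_disc:
  assumes "norm c + R < 1"
  shows "cball c R \<subseteq> unit_disc"
proof
  fix z assume "z \<in> cball c R"
  then have "norm z \<le> norm c + R" using norm_triangle_sub[of z c] by (simp add: dist_norm norm_minus_commute)
  then show "z \<in> unit_disc" using assms by (simp add: unit_disc_def)
qed

lemma two_constant_estimate_in_disc:
  fixes v :: "complex \<Rightarrow> ereal" and C \<sigma> \<theta> r0 r \<delta> :: real
  defines A_def: "A \<equiv> - \<sigma> * (ln (exp 1 / (1 - r)) - ln (5/4))"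
    and B_def: "B \<equiv> \<bar>C\<bar> * (ln (exp 1 / (1 - r)) + ln (4/3)) + 1 + \<sigma> * (ln (exp 1 / (1 - r)) - ln (5/4))"
  assumes sh: "subharmonic_on unit_disc v"
    and growth: "\<forall>z\<in>unit_disc. v z \<le> ereal (C * ln (exp 1 / (1 - norm z)))"
    and ray: "\<forall>\<rho>. r0 < \<rho> \<and> \<rho> < 1 \<longrightarrow> v (of_real \<rho> * cis \<theta>) < ereal (- \<sigma> * ln (exp 1 / (1 - \<rho>)))"
    and "0 < \<sigma>" "0 < r" "r < 1" "r0 < r - (1 - r) / 4"
    and \<delta>: "\<delta> \<noteq> 0" "\<bar>\<delta>\<bar> < (1 - r) / 8"
  shows "v (of_real r * cis (\<theta> + \<delta>)) \<le> ereal (A + B * (32 * \<bar>\<delta>\<bar> / (3 * (1 - r))))"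
proof -
  define R where "R = (1 - r) / 4"
  have "0 < R" "r0 < r - R" "norm (of_real r * cis \<theta>) + R < 1" using assms(7-9) unfolding R_def
    by (simp_all add: norm_mult) argo+
  have "1 \<le> ln (exp 1 / (1 - r))" using \<open>0 < r\<close> \<open>r < 1\<close> by (simp add: ln_div)
  then have "0 \<le> B"
    unfolding B_def using ln_le_minus_one[of "5/4::real"] \<open>0 < \<sigma>\<close> by simp
  have "r * \<bar>\<delta>\<bar> \<le> \<bar>\<delta>\<bar>" using \<open>0 < r\<close> \<open>r < 1\<close> by (simp add: mult_left_le_one_le)
  then have "\<bar>\<delta>\<bar> < pi" "r * \<bar>\<delta>\<bar> \<le> R / 2" using \<delta>(2) \<open>0 < r\<close> pi_gt3 unfolding R_def by argo+
  have "v (of_real r * cis (\<theta> + \<delta>)) \<le> ereal (A + B * (8 * r * \<bar>\<delta>\<bar> / (3 * R)))"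
  proof (rule two_constant_estimate_off_ray[OF sh cball_subset_unit_disc \<open>0 < R\<close> \<open>0 \<le> B\<close> \<open>0 < r\<close>
        \<delta>(1) \<open>\<bar>\<delta>\<bar> < pi\<close> \<open>r * \<bar>\<delta>\<bar> \<le> R / 2\<close>])
    show "norm (of_real r * cis \<theta>) + R < 1" by fact
    show "v (of_real \<rho> * cis \<theta>) < ereal A" if "\<bar>\<rho> - r\<bar> \<le> R" for \<rho>
      using ray_bound_near_ray[OF ray \<open>0 < \<sigma>\<close> \<open>r < 1\<close>] \<open>r0 < r - R\<close> that
      unfolding A_def R_def by blast
    show "v z < ereal (A + B)" if "norm (z - of_real r * cis \<theta>) = R" for z
    proof -
      have "norm z \<le> r + (1 - r) / 4"
        using norm_triangle_sub[of z "of_real r * cis \<theta>"] that \<open>0 < r\<close> unfolding R_def by (simp add: norm_mult)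
      from growth_bound_near_circle[OF growth \<open>r < 1\<close> this]
      show ?thesis unfolding A_def B_def by (simp add: order_le_less_trans)
    qed
  qed
  also have "8 * r * \<bar>\<delta>\<bar> / (3 * R) \<le> 32 * \<bar>\<delta>\<bar> / (3 * (1 - r))"
    using \<open>r * \<bar>\<delta>\<bar> \<le> \<bar>\<delta>\<bar>\<close> \<open>r < 1\<close> unfolding R_def by (simp add: divide_right_mono)
  then have "B * (8 * r * \<bar>\<delta>\<bar> / (3 * R)) \<le> B * (32 * \<bar>\<delta>\<bar> / (3 * (1 - r)))"
    using \<open>0 \<le> B\<close> by (rule mult_left_mono)
  finally show ?thesis by simp
qed

lemma decay_off_ray:
  fixes v :: "complex \<Rightarrow> ereal"
  assumes sh: "subharmonic_on unit_disc v"
    and growth: "\<forall>z\<in>unit_disc. v z \<le> ereal (C * ln (exp 1 / (1 - norm z)))"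
    and ray: "\<forall>\<rho>. r0 < \<rho> \<and> \<rho> < 1 \<longrightarrow> v (of_real \<rho> * cis \<theta>) < ereal (- \<sigma> * ln (exp 1 / (1 - \<rho>)))"
    and "0 < \<sigma>" "0 < r0" "(1 + r0) / 2 < r" "r < 1"
    and \<delta>: "\<delta> \<noteq> 0" "\<bar>\<delta>\<bar> < min (1/8) (\<sigma> / (48 * (2 * \<bar>C\<bar> + \<sigma> + 1))) * (1 - r)"
  shows "v (of_real r * cis (\<theta> + \<delta>)) < ereal (- (\<sigma> / 2) * ln (exp 1 / (1 - r)))"
proof -
  define L where "L = ln (exp 1 / (1 - r))"
  define K where "K = 2 * \<bar>C\<bar> + \<sigma> + 1"
  define A where "A = - \<sigma> * (L - ln (5/4))"
  define B where "B = \<bar>C\<bar> * (L + ln (4/3)) + 1 + \<sigma> * (L - ln (5/4))"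
  have "0 < r" "r0 < r - (1 - r) / 4" using assms(5-7) by argo+
  have "1 \<le> L" using \<open>0 < r\<close> \<open>r < 1\<close> unfolding L_def by (simp add: ln_div)
  have "K > 0" unfolding K_def using \<open>0 < \<sigma>\<close> by simp
  have ln54: "0 \<le> ln (5/4::real)" "ln (5/4::real) \<le> 1/4" and ln43: "ln (4/3::real) \<le> 1/3"
    using ln_le_minus_one[of "5/4::real"] ln_le_minus_one[of "4/3::real"] by auto
  have "\<bar>C\<bar> * (L + ln (4/3)) \<le> \<bar>C\<bar> * (2 * L)" "\<sigma> * (L - ln (5/4)) \<le> \<sigma> * L"
    using \<open>1 \<le> L\<close> ln54 ln43 \<open>0 < \<sigma>\<close> by (auto intro: mult_left_mono)
  then have B_le: "B \<le> K * L" unfolding B_def K_def using \<open>1 \<le> L\<close> by (simp add: algebra_simps)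
  have "\<bar>\<delta>\<bar> < \<sigma> / (48 * K) * (1 - r)" "\<bar>\<delta>\<bar> < (1 - r) / 8"
    using \<delta>(2) \<open>r < 1\<close> unfolding K_def by (auto simp: min_mult_distrib_right)
  then have "32 * \<bar>\<delta>\<bar> / (3 * (1 - r)) \<le> 2 * \<sigma> / (9 * K)"
    using \<open>r < 1\<close> \<open>K > 0\<close> by (simp add: field_simps)
  moreover have "0 \<le> B" unfolding B_def using \<open>1 \<le> L\<close> ln54 \<open>0 < \<sigma>\<close> by simp
  ultimately have "B * (32 * \<bar>\<delta>\<bar> / (3 * (1 - r))) \<le> (K * L) * (2 * \<sigma> / (9 * K))"
    using B_le \<open>r < 1\<close> by (intro mult_mono') auto
  moreover have "v (of_real r * cis (\<theta> + \<delta>)) \<le> ereal (A + B * (32 * \<bar>\<delta>\<bar> / (3 * (1 - r))))"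
    using two_constant_estimate_in_disc[OF sh growth ray \<open>0 < \<sigma>\<close> \<open>0 < r\<close> \<open>r < 1\<close>
        \<open>r0 < r - (1 - r) / 4\<close> \<delta>(1) \<open>\<bar>\<delta>\<bar> < (1 - r) / 8\<close>]
    unfolding A_def B_def L_def by simp
  moreover have "A + (K * L) * (2 * \<sigma> / (9 * K)) < - (\<sigma> / 2) * L"
    unfolding A_def using \<open>K > 0\<close> \<open>0 < \<sigma>\<close> \<open>1 \<le> L\<close> ln54 by (simp add: field_simps)
  ultimately show ?thesis unfolding L_def by (simp add: order_le_less_trans)
qed

theorem lemma8:
  shows "\<exists>(\<tau>2 :: real \<Rightarrow> real \<Rightarrow> real) (r1 :: real \<Rightarrow> real).
     (\<forall>C \<sigma>. \<sigma> > 0 \<longrightarrow> \<tau>2 C \<sigma> > 0) \<and>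
     (\<forall>r0. 0 < r0 \<and> r0 < 1 \<longrightarrow> r1 r0 < 1) \<and>
     (\<forall>(v :: complex \<Rightarrow> ereal) (C :: real) (\<sigma> :: real) (\<theta> :: real) (r0 :: real).
        subharmonic_on unit_disc v \<and>
        (\<forall>z\<in>unit_disc. v z \<le> ereal (C * ln (exp 1 / (1 - norm z)))) \<and>
        \<sigma> > 0 \<and> 0 \<le> \<theta> \<and> \<theta> \<le> 2 * pi \<and> 0 < r0 \<and> r0 < 1 \<and>
        (\<forall>r. r0 < r \<and> r < 1 \<longrightarrow>
              v (of_real r * cis \<theta>) < ereal (- \<sigma> * ln (exp 1 / (1 - r))))
      \<longrightarrow>
        (\<forall>r \<delta>. r1 r0 < r \<and> r < 1 \<and> \<bar>\<delta>\<bar> < \<tau>2 C \<sigma> * (1 - r) \<longrightarrow>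
              v (of_real r * cis (\<theta> + \<delta>)) < ereal (- (\<sigma> / 2) * ln (exp 1 / (1 - r)))))"
proof (intro exI[of _ "\<lambda>C \<sigma>. min (1/8) (\<sigma> / (48 * (2 * \<bar>C\<bar> + \<sigma> + 1)))"]
    exI[of _ "\<lambda>r0. (1 + r0) / 2"] conjI allI impI)
  show "0 < min (1/8) (\<sigma> / (48 * (2 * \<bar>C\<bar> + \<sigma> + 1)))" if "\<sigma> > 0" for C \<sigma> :: real
    using that by (simp add: add_pos_nonneg)
  show "(1 + r0) / 2 < 1" if "0 < r0 \<and> r0 < 1" for r0 :: real using that by simp
next
  fix v :: "complex \<Rightarrow> ereal" and C \<sigma> \<theta> r0 r \<delta> :: real
  assume hyps: "subharmonic_on unit_disc v \<and> (\<forall>z\<in>unit_disc. v z \<le> ereal (C * ln (exp 1 / (1 - norm z))))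
      \<and> \<sigma> > 0 \<and> 0 \<le> \<theta> \<and> \<theta> \<le> 2 * pi \<and> 0 < r0 \<and> r0 < 1
      \<and> (\<forall>r. r0 < r \<and> r < 1 \<longrightarrow> v (of_real r * cis \<theta>) < ereal (- \<sigma> * ln (exp 1 / (1 - r))))"
    and r\<delta>: "(1 + r0) / 2 < r \<and> r < 1 \<and> \<bar>\<delta>\<bar> < min (1/8) (\<sigma> / (48 * (2 * \<bar>C\<bar> + \<sigma> + 1))) * (1 - r)"
  then have sh: "subharmonic_on unit_disc v"
    and growth: "\<forall>z\<in>unit_disc. v z \<le> ereal (C * ln (exp 1 / (1 - norm z)))"
    and ray: "\<forall>r. r0 < r \<and> r < 1 \<longrightarrow> v (of_real r * cis \<theta>) < ereal (- \<sigma> * ln (exp 1 / (1 - r)))"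
    and "0 < \<sigma>" "0 < r0" "r0 < 1"
    by blast+
  from r\<delta> have r: "(1 + r0) / 2 < r" "r < 1" by blast+
  show "v (of_real r * cis (\<theta> + \<delta>)) < ereal (- (\<sigma> / 2) * ln (exp 1 / (1 - r)))"
  proof (cases "\<delta> = 0")
    case True
    have "r0 < r" using r \<open>r0 < 1\<close> by argo
    with ray r have "v (of_real r * cis \<theta>) < ereal (- \<sigma> * ln (exp 1 / (1 - r)))" by blast
    moreover have "1 \<le> ln (exp 1 / (1 - r))" using r \<open>0 < r0\<close> by (simp add: ln_div)
    ultimately show ?thesis using True \<open>0 < \<sigma>\<close> by (fastforce intro: order_less_le_trans)
  next
    case False
    with sh growth ray \<open>0 < \<sigma>\<close> \<open>0 < r0\<close> r r\<delta> show ?thesis by (intro decay_off_ray) auto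
  qed
qed

end
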